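(* Let $\lambda_1,\lambda_2\ge0$ and $\mathbf m\in\mathcal B(\lambda+\rho)_{res}$, and let $i\in\{1,2\}$. If $e_i(A(\mathbf m))\ne0$, then $e_i(\mathbf m)\in\mathcal B(\lambda+\rho)_{res}$ and $A(e_i(\mathbf m))=e_i(A(\mathbf m))$; likewise, if $f_i(A(\mathbf m))\ne0$, then $f_i(\mathbf m)\in\mathcal B(\lambda+\rho)_{res}$ and $A(f_i(\mathbf m))=f_i(A(\mathbf m))$. In particular the image $\mathrm{Arr}(\lambda)=A(\mathcal B(\lambda+\rho)_{res})$ is closed under the operators $e_1,e_2,f_1,f_2$ (wherever they are nonzero).
   Context: For $\mathbf m\in\mathbb Z_{\ge0}^6$ and integers $\lambda_1,\lambda_2\ge0$: $s_1=\lambda_2+m_5+m_6-m_1-m_2-m_3$, $s_2=\lambda_2+m_5+m_6-m_2-2m_3$, $s_3=\lambda_2+m_6-m_3-m_4$, $s_4=\lambda_2+m_6-m_4-m_5$, $s_5=\lambda_2-m_5$, $s_6=\lambda_1-m_6$. $\mathcal B(\lambda+\rho)_{res}$ is the set of $\mathbf m$ with $m_3=m_5$, $s_j\ge-1$ for $j\in\{1,2,5,6\}$, $s_3=s_4\le0$ even; decoration $d(\mathbf m)=-s_3/2$. An array is $\left[\begin{smallmatrix}a&b&c&b&d\\&x&y&z&\\&&k&&\end{smallmatrix}\right]$ with all entries in $\mathbb Z_{\ge0}$ (second entry equal to fourth in the top row); $k$ is its decoration and $a+6b+2c+d$ its weight. Raising operators: $e_1$ sends it to $\left[\begin{smallmatrix}a-1&b&c+1&b&d-1\\&x&y+1&z&\\&&k+1&&\end{smallmatrix}\right]$,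 or to $0$ if $\min\{a,d\}=0$; $e_2$ sends it to $\left[\begin{smallmatrix}a&b-1&c+3&b-1&d\\&x+1&y&z+1&\\&&k+1&&\end{smallmatrix}\right]$, or to $0$ if $b=0$. Lowering operators: $f_1$ sends it to $\left[\begin{smallmatrix}a+1&b&c-1&b&d+1\\&x&y-1&z&\\&&k-1&&\end{smallmatrix}\right]$, or $0$ if $\min\{c,y,k\}=0$; $f_2$ sends it to $\left[\begin{smallmatrix}a&b+1&c-3&b+1&d\\&x-1&y&z-1&\\&&k-1&&\end{smallmatrix}\right]$, or $0$ if $\min\{x,z,k\}=0$ or $c<3$. For $\mathbf m\in\mathcal B(\lambda+\rho)_{res}$, $A(\mathbf m)=\left[\begin{smallmatrix}m_2&m_5&m_4&m_5&m_6\\&s_2+1&s_6+1&s_5+1&\\&&d(\mathbf m)&&\end{smallmatrix}\right]$. On Lusztig data define $e_1(\mathbf m)=(m_1,m_2-1,m_3,m_4+1,m_5,m_6-1)$, $e_2(\mathbf m)=(m_1,m_2,m_3-1,m_4+3,m_5-1,m_6)$, $f_1(\mathbf m)=(m_1,m_2+1,m_3,m_4-1,m_5,m_6+1)$, $f_2(\mathbf m)=(m_1,m_2,m_3+1,m_4-3,m_5+1,m_6)$. *)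

theory Defs
  imports Main
begin

text \<open>Lusztig datum m = (m1,...,m6) in Z^6 (nonnegativity is part of membership in B_res).\<close>
datatype ldat = LD (m1: int) (m2: int) (m3: int) (m4: int) (m5: int) (m6: int)

definition s1 :: "int \<Rightarrow> int \<Rightarrow> ldat \<Rightarrow> int" where
  "s1 l1 l2 m = l2 + m5 m + m6 m - m1 m - m2 m - m3 m"
definition s2 :: "int \<Rightarrow> int \<Rightarrow> ldat \<Rightarrow> int" where
  "s2 l1 l2 m = l2 + m5 m + m6 m - m2 m - 2 * m3 m"
definition s3 :: "int \<Rightarrow> int \<Rightarrow> ldat \<Rightarrow> int" where
  "s3 l1 l2 m = l2 + m6 m - m3 m - m4 m"
definition s4 :: "int \<Rightarrow> int \<Rightarrow> ldat \<Rightarrow> int" where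
  "s4 l1 l2 m = l2 + m6 m - m4 m - m5 m"
definition s5 :: "int \<Rightarrow> int \<Rightarrow> ldat \<Rightarrow> int" where
  "s5 l1 l2 m = l2 - m5 m"
definition s6 :: "int \<Rightarrow> int \<Rightarrow> ldat \<Rightarrow> int" where
  "s6 l1 l2 m = l1 - m6 m"

definition Bres :: "int \<Rightarrow> int \<Rightarrow> ldat set" where
  "Bres l1 l2 = {m. m1 m \<ge> 0 \<and> m2 m \<ge> 0 \<and> m3 m \<ge> 0 \<and> m4 m \<ge> 0 \<and> m5 m \<ge> 0 \<and> m6 m \<ge> 0
      \<and> m3 m = m5 m
      \<and> s1 l1 l2 m \<ge> -1 \<and> s2 l1 l2 m \<ge> -1 \<and> s5 l1 l2 m \<ge> -1 \<and> s6 l1 l2 m \<ge> -1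
      \<and> s3 l1 l2 m = s4 l1 l2 m \<and> s3 l1 l2 m \<le> 0 \<and> even (s3 l1 l2 m)}"

text \<open>Decoration d(m) = -s3/2 (s3 is even on B_res).\<close>
definition deco :: "int \<Rightarrow> int \<Rightarrow> ldat \<Rightarrow> int" where
  "deco l1 l2 m = (- s3 l1 l2 m) div 2"

text \<open>Array [a b c b d; x y z; k]: fields a b c d x y z k (second top entry = fourth = b).\<close>
datatype arr = Ar (ta: int) (tb: int) (tc: int) (td: int) (mx: int) (my: int) (mz: int) (dk: int)

definition arr_weight :: "arr \<Rightarrow> int" where
  "arr_weight X = ta X + 6 * tb X + 2 * tc X + td X"

text \<open>Raising/lowering operators on arrays; None represents 0.\<close>
definition eA :: "nat \<Rightarrow> arr \<Rightarrow> arr option" where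
  "eA i X = (case X of Ar a b c d x y z k \<Rightarrow>
     if i = 1 then (if min a d = 0 then None else Some (Ar (a-1) b (c+1) (d-1) x (y+1) z (k+1)))
     else if i = 2 then (if b = 0 then None else Some (Ar a (b-1) (c+3) d (x+1) y (z+1) (k+1)))
     else None)"

definition fA :: "nat \<Rightarrow> arr \<Rightarrow> arr option" where
  "fA i X = (case X of Ar a b c d x y z k \<Rightarrow>
     if i = 1 then (if min c (min y k) = 0 then None else Some (Ar (a+1) b (c-1) (d+1) x (y-1) z (k-1)))
     else if i = 2 then (if min x (min z k) = 0 \<or> c < 3 then None
                         else Some (Ar a (b+1) (c-3) d (x-1) y (z-1) (k-1)))
     else None)"

definition Amap :: "int \<Rightarrow> int \<Rightarrow> ldat \<Rightarrow> arr" where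
  "Amap l1 l2 m = Ar (m2 m) (m5 m) (m4 m) (m6 m)
      (s2 l1 l2 m + 1) (s6 l1 l2 m + 1) (s5 l1 l2 m + 1) (deco l1 l2 m)"

definition eL :: "nat \<Rightarrow> ldat \<Rightarrow> ldat" where
  "eL i m = (case m of LD a b c d e f \<Rightarrow>
     if i = 1 then LD a (b-1) c (d+1) e (f-1) else LD a b (c-1) (d+3) (e-1) f)"

definition fL :: "nat \<Rightarrow> ldat \<Rightarrow> ldat" where
  "fL i m = (case m of LD a b c d e f \<Rightarrow>
     if i = 1 then LD a (b+1) c (d-1) e (f+1) else LD a b (c+1) (d-3) (e+1) f)"

end

theory Submission
  imports Defs
begin

text \<open>On a datum of \<open>B(\<lambda>+\<rho>)\<^sub>r\<^sub>e\<^sub>s\<close> each operator moves the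
coordinates \<open>m\<^sub>2, m\<^sub>5, m\<^sub>4, m\<^sub>6\<close> exactly as it moves the top row of the array,
and \<open>s\<^sub>2, s\<^sub>6, s\<^sub>5\<close> as it moves the middle row, while \<open>s\<^sub>1\<close> is unchanged.
Moreover \<open>s\<^sub>3 = s\<^sub>4\<close> drops by 2 under \<open>e\<^sub>i\<close> and rises by 2 under \<open>f\<^sub>i\<close>,
so the decoration \<open>-s\<^sub>3/2\<close> moves by one, as \<open>k\<close> does. The vanishing conditions of
the array operators are exactly what keeps the shifted datum in the set: those on the top row keep
the coordinates nonnegative, \<open>x, y, z > 0\<close> keep \<open>s\<^sub>2, s\<^sub>6, s\<^sub>5 \<ge> -1\<close>, and
\<open>k > 0\<close> leaves room for \<open>s\<^sub>3\<close> to rise by 2 while staying \<open>\<le> 0\<close>.\<close>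

lemmas s_defs = s1_def s2_def s3_def s4_def s5_def s6_def

lemma s3_eq_minus_twice_deco: "m \<in> Bres l1 l2 \<Longrightarrow> s3 l1 l2 m = - 2 * deco l1 l2 m"
  unfolding Bres_def deco_def by (simp only: mem_Collect_eq) presburger

lemma deco_eqI: "s3 l1 l2 m = - 2 * k \<Longrightarrow> deco l1 l2 m = k"
  by (simp add: deco_def)

lemma Amap_nonneg:
  assumes "m \<in> Bres l1 l2"
  shows "0 \<le> s2 l1 l2 m + 1" "0 \<le> s5 l1 l2 m + 1" "0 \<le> s6 l1 l2 m + 1" "0 \<le> deco l1 l2 m"
  using assms s3_eq_minus_twice_deco[OF assms] by (auto simp: Bres_def)

lemma min_eq_0_iff: "0 \<le> x \<Longrightarrow> 0 \<le> y \<Longrightarrow> min x y = (0::int) \<longleftrightarrow> x = 0 \<or> y = 0"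
  by (auto simp: min_def)

lemma Amap_raise1:
  assumes m: "m \<in> Bres l1 l2" and nz: "eA 1 (Amap l1 l2 m) \<noteq> None"
  shows "eL 1 m \<in> Bres l1 l2 \<and> eA 1 (Amap l1 l2 m) = Some (Amap l1 l2 (eL 1 m))"
proof (cases m)
  case (LD a b c d e f)
  have nz_conds: "m2 m \<noteq> 0" "m6 m \<noteq> 0"
    using nz m by (auto simp: Amap_def eA_def Bres_def min_eq_0_iff)
  have deco_shift: "deco l1 l2 (eL 1 m) = deco l1 l2 m + 1"
    using s3_eq_minus_twice_deco[OF m] by (intro deco_eqI) (auto simp: LD eL_def s3_def)
  have "eL 1 m \<in> Bres l1 l2"
    using m nz_conds by (auto simp: LD Bres_def s_defs eL_def)
  moreover have "eA 1 (Amap l1 l2 m) = Some (Amap l1 l2 (eL 1 m))"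
    using m nz_conds deco_shift
    by (auto simp: LD Amap_def s_defs eL_def eA_def Bres_def)
  ultimately show ?thesis ..
qed

lemma Amap_lower1:
  assumes m: "m \<in> Bres l1 l2" and nz: "fA 1 (Amap l1 l2 m) \<noteq> None"
  shows "fL 1 m \<in> Bres l1 l2 \<and> fA 1 (Amap l1 l2 m) = Some (Amap l1 l2 (fL 1 m))"
proof (cases m)
  case (LD a b c d e f)
  have nz_conds: "m4 m \<noteq> 0" "s6 l1 l2 m + 1 \<noteq> 0" "deco l1 l2 m \<noteq> 0"
    using nz m Amap_nonneg[OF m] by (auto simp: Amap_def fA_def Bres_def min_eq_0_iff)
  have deco_shift: "deco l1 l2 (fL 1 m) = deco l1 l2 m - 1"
    using s3_eq_minus_twice_deco[OF m] by (intro deco_eqI) (auto simp: LD fL_def s3_def)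
  have "fL 1 m \<in> Bres l1 l2"
    using m nz_conds s3_eq_minus_twice_deco[OF m] Amap_nonneg[OF m]
    by (auto simp: LD Bres_def s_defs fL_def)
  moreover have "fA 1 (Amap l1 l2 m) = Some (Amap l1 l2 (fL 1 m))"
    using nz_conds deco_shift Amap_nonneg[OF m]
    by (auto simp: LD Amap_def s_defs fL_def fA_def min_eq_0_iff)
  ultimately show ?thesis ..
qed

lemma Amap_raise2:
  assumes m: "m \<in> Bres l1 l2" and nz: "eA 2 (Amap l1 l2 m) \<noteq> None"
  shows "eL 2 m \<in> Bres l1 l2 \<and> eA 2 (Amap l1 l2 m) = Some (Amap l1 l2 (eL 2 m))"
proof (cases m)
  case (LD a b c d e f)
  have nz_conds: "m5 m \<noteq> 0"
    using nz by (auto simp: Amap_def eA_def)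
  have deco_shift: "deco l1 l2 (eL 2 m) = deco l1 l2 m + 1"
    using s3_eq_minus_twice_deco[OF m] by (intro deco_eqI) (auto simp: LD eL_def s3_def)
  have "eL 2 m \<in> Bres l1 l2"
    using m nz_conds by (auto simp: LD Bres_def s_defs eL_def)
  moreover have "eA 2 (Amap l1 l2 m) = Some (Amap l1 l2 (eL 2 m))"
    using nz_conds deco_shift by (auto simp: LD Amap_def s_defs eL_def eA_def)
  ultimately show ?thesis ..
qed

lemma Amap_lower2:
  assumes m: "m \<in> Bres l1 l2" and nz: "fA 2 (Amap l1 l2 m) \<noteq> None"
  shows "fL 2 m \<in> Bres l1 l2 \<and> fA 2 (Amap l1 l2 m) = Some (Amap l1 l2 (fL 2 m))"
proof (cases m)
  case (LD a b c d e f)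
  have nz_conds: "m4 m \<ge> 3" "s2 l1 l2 m + 1 \<noteq> 0" "s5 l1 l2 m + 1 \<noteq> 0" "deco l1 l2 m \<noteq> 0"
    using nz Amap_nonneg[OF m] by (auto simp: Amap_def fA_def min_eq_0_iff split: if_splits)
  have deco_shift: "deco l1 l2 (fL 2 m) = deco l1 l2 m - 1"
    using s3_eq_minus_twice_deco[OF m] by (intro deco_eqI) (auto simp: LD fL_def s3_def)
  have "fL 2 m \<in> Bres l1 l2"
    using m nz_conds s3_eq_minus_twice_deco[OF m] Amap_nonneg[OF m]
    by (auto simp: LD Bres_def s_defs fL_def)
  moreover have "fA 2 (Amap l1 l2 m) = Some (Amap l1 l2 (fL 2 m))"
    using nz_conds deco_shift Amap_nonneg[OF m]
    by (auto simp: LD Amap_def s_defs fL_def fA_def min_eq_0_iff)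
  ultimately show ?thesis ..
qed

lemma Amap_raise:
  assumes "m \<in> Bres l1 l2" and "i \<in> {1, 2}" and "eA i (Amap l1 l2 m) \<noteq> None"
  shows "eL i m \<in> Bres l1 l2 \<and> eA i (Amap l1 l2 m) = Some (Amap l1 l2 (eL i m))"
  using assms Amap_raise1 Amap_raise2 by auto

lemma Amap_lower:
  assumes "m \<in> Bres l1 l2" and "i \<in> {1, 2}" and "fA i (Amap l1 l2 m) \<noteq> None"
  shows "fL i m \<in> Bres l1 l2 \<and> fA i (Amap l1 l2 m) = Some (Amap l1 l2 (fL i m))"
  using assms Amap_lower1 Amap_lower2 by auto

lemma Amap_image_closed:
  assumes "X \<in> Amap l1 l2 ` Bres l1 l2" and "j \<in> {1, 2}"
  shows "eA j X = Some Y \<Longrightarrow> Y \<in> Amap l1 l2 ` Bres l1 l2"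
    and "fA j X = Some Y \<Longrightarrow> Y \<in> Amap l1 l2 ` Bres l1 l2"
proof -
  from assms(1) obtain m where m: "m \<in> Bres l1 l2" and X: "X = Amap l1 l2 m" by blast
  show "eA j X = Some Y \<Longrightarrow> Y \<in> Amap l1 l2 ` Bres l1 l2"
    using Amap_raise[OF m assms(2)] X by auto
  show "fA j X = Some Y \<Longrightarrow> Y \<in> Amap l1 l2 ` Bres l1 l2"
    using Amap_lower[OF m assms(2)] X by auto
qed

theorem mainTheorem7:
  fixes l1 l2 :: int and m :: ldat and i :: nat
  assumes "l1 \<ge> 0" and "l2 \<ge> 0" and "m \<in> Bres l1 l2" and "i \<in> {1, 2}"
  shows "(eA i (Amap l1 l2 m) \<noteq> None \<longrightarrow>
            eL i m \<in> Bres l1 l2 \<and> eA i (Amap l1 l2 m) = Some (Amap l1 l2 (eL i m)))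
       \<and> (fA i (Amap l1 l2 m) \<noteq> None \<longrightarrow>
            fL i m \<in> Bres l1 l2 \<and> fA i (Amap l1 l2 m) = Some (Amap l1 l2 (fL i m)))
       \<and> (\<forall>X \<in> Amap l1 l2 ` Bres l1 l2. \<forall>j \<in> {1::nat, 2}. \<forall>Y.
            (eA j X = Some Y \<longrightarrow> Y \<in> Amap l1 l2 ` Bres l1 l2)
          \<and> (fA j X = Some Y \<longrightarrow> Y \<in> Amap l1 l2 ` Bres l1 l2))"
proof -
  have "\<forall>X \<in> Amap l1 l2 ` Bres l1 l2. \<forall>j \<in> {1::nat, 2}. \<forall>Y.
          (eA j X = Some Y \<longrightarrow> Y \<in> Amap l1 l2 ` Bres l1 l2)
        \<and> (fA j X = Some Y \<longrightarrow> Y \<in> Amap l1 l2 ` Bres l1 l2)"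
    by (intro ballI allI conjI impI) (fact Amap_image_closed)+
  with Amap_raise[OF assms(3,4)] Amap_lower[OF assms(3,4)] show ?thesis
    by (intro conjI impI) blast+
qed

end
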